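(* Let $G$ be a graph of order $n\ge 9$ with twin number $\tau$, and let $W$ be a $\tau$-set. Then $\beta_p(G)=n-1$ if and only if either (i) $\tau=n-1$, or (ii) $\tau=n-2$ and $G[W]\cong K_{n-2}$.
   Context: All graphs are finite, simple, undirected and connected. Two vertices $u,v$ are twins if $N(u)\setminus\{v\}=N(v)\setminus\{u\}$; the twin number $\tau(G)$ is the maximum cardinality of an equivalence class of the twin relation; a $\tau$-set is a set of pairwise twin vertices of cardinality $\tau(G)$. For a partition $\Pi=\{S_1,\dots,S_k\}$ of $V(G)$, $r(u|\Pi)=(d(u,S_1),\dots,d(u,S_k))$ with $d(u,S)=\min_{w\in S}d(u,w)$; $\Pi$ is locating if $r(u|\Pi)\ne r(v|\Pi)$ for all distinct $u,v$; $\beta_p(G)$ is the minimum size of a locating partition. *)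

theory Defs
  imports Main "HOL-Library.Disjoint_Sets"
begin

definition simple_graph :: "'a set \<Rightarrow> ('a \<Rightarrow> 'a \<Rightarrow> bool) \<Rightarrow> bool" where
  "simple_graph V E \<longleftrightarrow> finite V \<and> V \<noteq> {} \<and>
     (\<forall>u v. E u v \<longrightarrow> u \<in> V \<and> v \<in> V) \<and>
     (\<forall>u v. E u v \<longrightarrow> E v u) \<and> (\<forall>u. \<not> E u u)"

definition walk :: "'a set \<Rightarrow> ('a \<Rightarrow> 'a \<Rightarrow> bool) \<Rightarrow> 'a list \<Rightarrow> bool" where
  "walk V E p \<longleftrightarrow> p \<noteq> [] \<and> set p \<subseteq> V \<and> (\<forall>i. Suc i < length p \<longrightarrow> E (p ! i) (p ! Suc i))"

definition connected_graph :: "'a set \<Rightarrow> ('a \<Rightarrow> 'a \<Rightarrow> bool) \<Rightarrow> bool" where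
  "connected_graph V E \<longleftrightarrow>
     (\<forall>u\<in>V. \<forall>v\<in>V. \<exists>p. walk V E p \<and> hd p = u \<and> last p = v)"

definition dist :: "'a set \<Rightarrow> ('a \<Rightarrow> 'a \<Rightarrow> bool) \<Rightarrow> 'a \<Rightarrow> 'a \<Rightarrow> nat" where
  "dist V E u v = (LEAST k. \<exists>p. walk V E p \<and> hd p = u \<and> last p = v \<and> length p = Suc k)"

definition dist_set :: "'a set \<Rightarrow> ('a \<Rightarrow> 'a \<Rightarrow> bool) \<Rightarrow> 'a \<Rightarrow> 'a set \<Rightarrow> nat" where
  "dist_set V E u S = Min ((\<lambda>w. dist V E u w) ` S)"

definition nbhd :: "'a set \<Rightarrow> ('a \<Rightarrow> 'a \<Rightarrow> bool) \<Rightarrow> 'a \<Rightarrow> 'a set" where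
  "nbhd V E u = {w \<in> V. E u w}"

definition twins :: "'a set \<Rightarrow> ('a \<Rightarrow> 'a \<Rightarrow> bool) \<Rightarrow> 'a \<Rightarrow> 'a \<Rightarrow> bool" where
  "twins V E u v \<longleftrightarrow> nbhd V E u - {v} = nbhd V E v - {u}"

definition twin_class :: "'a set \<Rightarrow> ('a \<Rightarrow> 'a \<Rightarrow> bool) \<Rightarrow> 'a \<Rightarrow> 'a set" where
  "twin_class V E u = {v \<in> V. twins V E u v}"

definition twin_number :: "'a set \<Rightarrow> ('a \<Rightarrow> 'a \<Rightarrow> bool) \<Rightarrow> nat" where
  "twin_number V E = Max ((\<lambda>u. card (twin_class V E u)) ` V)"

definition tau_set :: "'a set \<Rightarrow> ('a \<Rightarrow> 'a \<Rightarrow> bool) \<Rightarrow> 'a set \<Rightarrow> bool" where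
  "tau_set V E W \<longleftrightarrow> W \<subseteq> V \<and> (\<forall>u\<in>W. \<forall>v\<in>W. twins V E u v) \<and>
     card W = twin_number V E"

definition rep :: "'a set \<Rightarrow> ('a \<Rightarrow> 'a \<Rightarrow> bool) \<Rightarrow> 'a set set \<Rightarrow> 'a \<Rightarrow> ('a set \<Rightarrow> nat)" where
  "rep V E P u = restrict (\<lambda>S. dist_set V E u S) P"

definition locating_partition :: "'a set \<Rightarrow> ('a \<Rightarrow> 'a \<Rightarrow> bool) \<Rightarrow> 'a set set \<Rightarrow> bool" where
  "locating_partition V E P \<longleftrightarrow> partition_on V P \<and>
     (\<forall>u\<in>V. \<forall>v\<in>V. u \<noteq> v \<longrightarrow> rep V E P u \<noteq> rep V E P v)"

definition partition_dimension :: "'a set \<Rightarrow> ('a \<Rightarrow> 'a \<Rightarrow> bool) \<Rightarrow> nat" where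
  "partition_dimension V E = (LEAST k. \<exists>P. locating_partition V E P \<and> card P = k)"

definition induced_complete :: "'a set \<Rightarrow> ('a \<Rightarrow> 'a \<Rightarrow> bool) \<Rightarrow> 'a set \<Rightarrow> nat \<Rightarrow> bool" where
  "induced_complete V E W m \<longleftrightarrow> W \<subseteq> V \<and> card W = m \<and>
     (\<forall>u\<in>W. \<forall>v\<in>W. u \<noteq> v \<longrightarrow> E u v)"

end

theory Submission
  imports Defs
begin

text \<open>Twins are at the same distance from every other vertex, so they must lie in different
  classes of a locating partition; hence \<open>\<beta>\<^sub>p \<ge> \<tau>\<close>. A pair of non-twins is resolved by a
  vertex adjacent to exactly one of them, and merging such pairs while keeping all other
  vertices as singletons gives a locating partition: one pair gives \<open>\<beta>\<^sub>p \<le> n - 1\<close> as soon as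
  \<open>G\<close> is not complete, and two disjoint pairs resolved from outside give \<open>\<beta>\<^sub>p \<le> n - 2\<close>.
  So \<open>\<beta>\<^sub>p = n - 1\<close> excludes the latter configuration, which for \<open>n \<ge> 9\<close> leaves only a star
  (\<open>\<tau> = n - 1\<close>) or a clique on \<open>n - 2\<close> vertices forming a whole twin class (\<open>\<tau> = n - 2\<close>).
  Conversely, if the \<open>\<tau>\<close>-set \<open>W\<close> is a clique of size \<open>n - 2\<close>, a locating partition with
  \<open>n - 2\<close> classes would contain exactly one vertex of \<open>W\<close> in each class, and a neighbour of
  \<open>W\<close> outside \<open>W\<close> would have the same representation as the vertex of \<open>W\<close> in its class.\<close>

lemma ex_not_in_list:
  assumes "length xs < card X"
  shows "\<exists>x\<in>X. x \<notin> set xs"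
proof (rule ccontr)
  assume "\<not> ?thesis"
  then have "card X \<le> card (set xs)"
    by (intro card_mono) auto
  with assms card_length[of xs] show False
    by linarith
qed

lemma clique_or_independent:
  assumes sym: "\<And>x y. R x y \<Longrightarrow> R y x" and card: "5 \<le> card X"
    and const: "\<And>c d s. c \<in> X \<Longrightarrow> d \<in> X \<Longrightarrow> s \<in> X \<Longrightarrow> distinct [c, d, s] \<Longrightarrow> R s c = R s d"
  shows "(\<forall>x\<in>X. \<forall>y\<in>X. x \<noteq> y \<longrightarrow> R x y) \<or> (\<forall>x\<in>X. \<forall>y\<in>X. x \<noteq> y \<longrightarrow> \<not> R x y)"
proof -
  have same: "R c d = R c' d'"
    if "c \<in> X" "d \<in> X" "c' \<in> X" "d' \<in> X" "c \<noteq> d" "c' \<noteq> d'" for c d c' d'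
  proof -
    obtain e where e: "e \<in> X" "e \<notin> set [c, d, c', d']"
      using ex_not_in_list[of "[c, d, c', d']" X] card by auto
    have "R c d = R c e"
      using const[of d e c] that e by auto
    also have "\<dots> = R e c'"
      using const[of c c' e] sym that e by (cases "c = c'") auto
    also have "\<dots> = R c' d'"
      using const[of e d' c'] sym that e by auto
    finally show ?thesis .
  qed
  show ?thesis
    using same by blast
qed

lemma walk_Cons_Cons:
  "walk V E (x # y # p) \<longleftrightarrow> x \<in> V \<and> E x y \<and> walk V E (y # p)"
proof -
  have "(\<forall>i. Suc i < length (x # y # p) \<longrightarrow> E ((x # y # p) ! i) ((x # y # p) ! Suc i)) \<longleftrightarrow>
        E x y \<and> (\<forall>i. Suc i < length (y # p) \<longrightarrow> E ((y # p) ! i) ((y # p) ! Suc i))"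
    by (metis (no_types, lifting) Suc_less_eq length_Cons nth_Cons_0 nth_Cons_Suc
        zero_less_Suc not0_implies_Suc)
  then show ?thesis
    by (auto simp: walk_def)
qed

lemma walk_leaves_set:
  assumes "walk V E p" "hd p \<in> S" "last p \<notin> S"
  shows "\<exists>a\<in>S. \<exists>b. b \<notin> S \<and> E a b"
  using assms
proof (induction p rule: induct_list012)
  case (3 x y p)
  then show ?case
    by (cases "y \<in> S") (auto simp: walk_Cons_Cons)
qed (auto simp: walk_def)

lemma dist_le_walk:
  assumes "walk V E p" "hd p = u" "last p = v" "length p = Suc k"
  shows "dist V E u v \<le> k"
  unfolding dist_def using assms by (intro Least_le) blast

lemma dist_set_le:
  assumes "finite S" "w \<in> S"
  shows "dist_set V E u S \<le> dist V E u w"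
  unfolding dist_set_def using assms by (intro Min_le) auto

lemma partition_on_class:
  assumes "partition_on A P" "S \<in> P"
  shows "S \<subseteq> A" "S \<noteq> {}"
  using assms partition_onD1 partition_onD3 by blast+

lemma partition_on_ex_class:
  assumes "partition_on A P" "u \<in> A"
  shows "\<exists>S\<in>P. u \<in> S"
  using assms partition_onD1 by blast

lemma partition_on_class_unique:
  assumes "partition_on A P" "S \<in> P" "T \<in> P" "u \<in> S" "u \<in> T"
  shows "S = T"
  using assms partition_onD2[OF assms(1)] by (auto simp: disjoint_def)

definition two_resolved_pairs :: "'a set \<Rightarrow> ('a \<Rightarrow> 'a \<Rightarrow> bool) \<Rightarrow> bool" where
  "two_resolved_pairs V E \<longleftrightarrow> (\<exists>a1 b1 a2 b2 r1 r2.
     distinct [a1, b1, a2, b2] \<and> {a1, b1, a2, b2} \<subseteq> V \<and>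
     r1 \<in> V - {a1, b1, a2, b2} \<and> r2 \<in> V - {a1, b1, a2, b2} \<and>
     E r1 a1 \<noteq> E r1 b1 \<and> E r2 a2 \<noteq> E r2 b2)"

lemma two_resolved_pairsI:
  assumes "distinct [a1, b1, a2, b2]" "{a1, b1, a2, b2} \<subseteq> V"
    "r1 \<in> V - {a1, b1, a2, b2}" "r2 \<in> V - {a1, b1, a2, b2}"
    "E r1 a1 \<noteq> E r1 b1" "E r2 a2 \<noteq> E r2 b2"
  shows "two_resolved_pairs V E"
  unfolding two_resolved_pairs_def using assms
  by (intro exI[of _ a1] exI[of _ b1] exI[of _ a2] exI[of _ b2] exI[of _ r1] exI[of _ r2] conjI)

locale connected_simple_graph =
  fixes V :: "'a set" and E :: "'a \<Rightarrow> 'a \<Rightarrow> bool"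
  assumes simple: "simple_graph V E" and connected: "connected_graph V E"
begin

lemma finite_V: "finite V"
  using simple by (simp add: simple_graph_def)

lemma adj_sym: "E u v \<Longrightarrow> E v u"
  using simple by (simp add: simple_graph_def)

lemma adj_irrefl: "\<not> E u u"
  using simple by (simp add: simple_graph_def)

lemma adj_in_V:
  shows "E u v \<Longrightarrow> u \<in> V" and "E u v \<Longrightarrow> v \<in> V"
  using simple by (simp_all add: simple_graph_def)

subsection \<open>Distances\<close>

lemma shortest_walk:
  assumes "u \<in> V" "v \<in> V"
  obtains p where "walk V E p" "hd p = u" "last p = v" "length p = Suc (dist V E u v)"
proof -
  obtain p where "walk V E p" "hd p = u" "last p = v"
    using connected assms by (auto simp: connected_graph_def)
  then have "\<exists>k p. walk V E p \<and> hd p = u \<and> last p = v \<and> length p = Suc k"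
    by (intro exI[of _ "length p - 1"] exI[of _ p]) (auto simp: walk_def)
  from LeastI_ex[OF this] show thesis
    using that unfolding dist_def by blast
qed

lemma dist_self: "u \<in> V \<Longrightarrow> dist V E u u = 0"
  using dist_le_walk[of V E "[u]" u u 0] by (simp add: walk_def)

lemma dist_eq_0_iff:
  assumes "u \<in> V" "v \<in> V"
  shows "dist V E u v = 0 \<longleftrightarrow> u = v"
proof
  assume "dist V E u v = 0"
  then obtain p where "walk V E p" "hd p = u" "last p = v" "length p = Suc 0"
    using shortest_walk[OF assms] by metis
  then show "u = v"
    by (auto simp: length_Suc_conv)
qed (simp add: dist_self assms)

lemma dist_eq_1_iff:
  assumes "u \<in> V" "v \<in> V"
  shows "dist V E u v = 1 \<longleftrightarrow> E u v"
proof
  assume "dist V E u v = 1"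
  then obtain p where "walk V E p" "hd p = u" "last p = v" "length p = Suc (Suc 0)"
    using shortest_walk[OF assms] by (metis One_nat_def)
  then show "E u v"
    by (auto simp: length_Suc_conv walk_def)
next
  assume "E u v"
  then have "dist V E u v \<le> 1"
    using dist_le_walk[of V E "[u, v]" u v 1] assms by (simp add: walk_Cons_Cons walk_def)
  moreover have "u \<noteq> v"
    using \<open>E u v\<close> adj_irrefl by blast
  ultimately show "dist V E u v = 1"
    using dist_eq_0_iff[OF assms] by linarith
qed

lemma twins_iff: "twins V E u v \<longleftrightarrow> (\<forall>w\<in>V - {u, v}. E u w \<longleftrightarrow> E v w)"
  unfolding twins_def nbhd_def set_eq_iff using adj_irrefl by blast

lemma dist_twin_le:
  assumes twins: "twins V E a b" and V: "a \<in> V" "b \<in> V" "w \<in> V" and "w \<noteq> a"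
  shows "dist V E b w \<le> dist V E a w"
proof -
  obtain p where p: "walk V E p" "hd p = a" "last p = w" "length p = Suc (dist V E a w)"
    using shortest_walk V by metis
  then obtain x q where "p = a # x # q"
    using \<open>w \<noteq> a\<close> by (cases p; cases "tl p") auto
  with p have ax: "E a x" and walk: "walk V E (x # q)"
    and last: "last (x # q) = w" and len: "length (x # q) = dist V E a w"
    by (auto simp: walk_Cons_Cons)
  show ?thesis
  proof (cases "x = b")
    case True
    then show ?thesis
      using dist_le_walk[OF walk, of b w "length q"] last len by simp
  next
    case False
    then have "E b x"
      using twins ax adj_in_V(2)[OF ax] unfolding twins_iff by (metis DiffI adj_irrefl insertE singletonD)
    then have "walk V E (b # x # q)"
      using walk V by (simp add: walk_Cons_Cons)
    then show ?thesis
      using dist_le_walk[of V E "b # x # q" b w "dist V E a w"] last len by simp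
  qed
qed

lemma dist_twins:
  assumes "twins V E a b" "a \<in> V" "b \<in> V" "w \<in> V" "w \<noteq> a" "w \<noteq> b"
  shows "dist V E a w = dist V E b w"
proof -
  have "twins V E b a"
    using assms(1) by (simp add: twins_def)
  then show ?thesis
    using dist_twin_le assms by (metis le_antisym)
qed

lemma cut_edge:
  assumes "S \<subseteq> V" "u \<in> S" "v \<in> V - S"
  shows "\<exists>a\<in>S. \<exists>b\<in>V - S. E a b"
proof -
  obtain p where "walk V E p" "hd p = u" "last p = v"
    using connected assms unfolding connected_graph_def by blast
  then obtain a b where "a \<in> S" "b \<notin> S" "E a b"
    using walk_leaves_set[of V E p S] assms by auto
  then show ?thesis
    using adj_in_V(2) by blast
qed

lemma has_neighbour:
  assumes "u \<in> V" "2 \<le> card V"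
  obtains w where "E u w"
proof -
  obtain v where "v \<in> V" "v \<notin> set [u]"
    using ex_not_in_list[of "[u]" V] assms(2) by auto
  then show thesis
    using cut_edge[of "{u}" u v] assms(1) that by auto
qed

lemma dist_set_eq_0_iff:
  assumes "S \<subseteq> V" "S \<noteq> {}" "u \<in> V"
  shows "dist_set V E u S = 0 \<longleftrightarrow> u \<in> S"
proof -
  have fin: "finite S"
    using assms(1) finite_V finite_subset by blast
  show ?thesis
  proof
    assume "dist_set V E u S = 0"
    moreover have "dist_set V E u S \<in> (\<lambda>w. dist V E u w) ` S"
      unfolding dist_set_def using fin assms(2) by (intro Min_in) auto
    ultimately show "u \<in> S"
      using dist_eq_0_iff assms by fastforce
  next
    assume "u \<in> S"
    then show "dist_set V E u S = 0"
      using dist_set_le[OF fin] dist_self assms(3) by (metis le_zero_eq)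
  qed
qed

lemma dist_set_eq_1:
  assumes "S \<subseteq> V" "u \<in> V - S" "w \<in> S" "E u w"
  shows "dist_set V E u S = 1"
proof -
  have "dist_set V E u S \<le> 1"
    using dist_set_le[of S w] dist_eq_1_iff assms finite_V finite_subset by (metis DiffD1 subsetD)
  moreover have "dist_set V E u S \<noteq> 0"
    using dist_set_eq_0_iff assms by blast
  ultimately show ?thesis
    by simp
qed

subsection \<open>Locating partitions\<close>

lemma locating_partition_dist_set_inj:
  assumes "locating_partition V E P" "u \<in> V" "v \<in> V"
    and "\<And>S. S \<in> P \<Longrightarrow> dist_set V E u S = dist_set V E v S"
  shows "u = v"
proof -
  have "rep V E P u = rep V E P v"
    unfolding rep_def using assms(4) by (intro restrict_ext) auto
  then show ?thesis
    using assms(1-3) by (auto simp: locating_partition_def)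
qed

lemma locating_partitionI:
  assumes P: "partition_on V P"
    and resolved: "\<And>S u v. S \<in> P \<Longrightarrow> u \<in> S \<Longrightarrow> v \<in> S \<Longrightarrow> u \<noteq> v \<Longrightarrow>
      \<exists>w. {w} \<in> P \<and> E w u \<noteq> E w v"
  shows "locating_partition V E P"
  unfolding locating_partition_def
proof (intro conjI ballI impI P)
  fix u v assume u: "u \<in> V" and v: "v \<in> V" and "u \<noteq> v"
  obtain S where S: "S \<in> P" "u \<in> S"
    using partition_on_ex_class[OF P u] by blast
  have "\<exists>T\<in>P. dist_set V E u T \<noteq> dist_set V E v T"
  proof (cases "v \<in> S")
    case False
    have "dist_set V E u S = 0" "dist_set V E v S \<noteq> 0"
      using dist_set_eq_0_iff[OF partition_on_class[OF P S(1)]] S(2) False u v by auto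
    then show ?thesis
      using S(1) by force
  next
    case True
    then obtain w where w: "{w} \<in> P" "E w u \<noteq> E w v"
      using resolved S \<open>u \<noteq> v\<close> by blast
    then have "w \<in> V" "E u w \<noteq> E v w"
      using partition_on_class[OF P w(1)] adj_sym by blast+
    then have "dist V E u w \<noteq> dist V E v w"
      using dist_eq_1_iff[OF u] dist_eq_1_iff[OF v] by metis
    then show ?thesis
      using w(1) by (intro bexI[of _ "{w}"]) (simp_all add: dist_set_def)
  qed
  then obtain T where "T \<in> P" "dist_set V E u T \<noteq> dist_set V E v T"
    by blast
  then have "rep V E P u T \<noteq> rep V E P v T"
    by (simp add: rep_def)
  then show "rep V E P u \<noteq> rep V E P v"
    by metis
qed

lemma twins_in_class_eq:
  assumes L: "locating_partition V E P" and S: "S \<in> P" "a \<in> S" "b \<in> S"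
    and twins: "twins V E a b"
  shows "a = b"
proof -
  have P: "partition_on V P"
    using L by (simp add: locating_partition_def)
  have ab: "a \<in> V" "b \<in> V"
    using partition_on_class[OF P S(1)] S by auto
  show ?thesis
  proof (rule locating_partition_dist_set_inj[OF L ab])
    fix T assume T: "T \<in> P"
    show "dist_set V E a T = dist_set V E b T"
    proof (cases "T = S")
      case True
      have "dist_set V E a S = 0" "dist_set V E b S = 0"
        using dist_set_eq_0_iff[OF partition_on_class[OF P S(1)]] S ab by simp_all
      then show ?thesis
        using True by simp
    next
      case False
      then have "a \<notin> T" "b \<notin> T"
        using partition_on_class_unique[OF P T S(1)] S by auto
      then have "(\<lambda>w. dist V E a w) ` T = (\<lambda>w. dist V E b w) ` T"
        using dist_twins[OF twins ab] partition_on_class[OF P T] by (intro image_cong) auto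
      then show ?thesis
        by (simp add: dist_set_def)
    qed
  qed
qed

lemma twins_classes:
  assumes L: "locating_partition V E P" and X: "X \<subseteq> V" "\<forall>x\<in>X. \<forall>y\<in>X. twins V E x y"
  obtains f where "inj_on f X" "f ` X \<subseteq> P" "\<forall>x\<in>X. x \<in> f x"
proof -
  have P: "partition_on V P"
    using L by (simp add: locating_partition_def)
  have "\<exists>S. S \<in> P \<and> x \<in> S" if "x \<in> X" for x
    using partition_on_ex_class[OF P] X(1) that by blast
  then obtain f where f: "\<forall>x\<in>X. f x \<in> P \<and> x \<in> f x"
    by metis
  have "inj_on f X"
  proof (rule inj_onI)
    fix x y assume "x \<in> X" "y \<in> X" "f x = f y"
    then show "x = y"
      using twins_in_class_eq[OF L, of "f x" x y] f X(2) by auto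
  qed
  moreover have "f ` X \<subseteq> P"
    using f by blast
  ultimately show thesis
    using that f by blast
qed

lemma locating_singletons: "locating_partition V E ((\<lambda>x. {x}) ` V)"
  by (rule locating_partitionI) (auto simp: partition_on_singletons)

lemma partition_dimension_le: "locating_partition V E P \<Longrightarrow> partition_dimension V E \<le> card P"
  unfolding partition_dimension_def by (rule Least_le) blast

lemma partition_dimension_attained:
  obtains P where "locating_partition V E P" "card P = partition_dimension V E"
proof -
  have "\<exists>k P. locating_partition V E P \<and> card P = k"
    using locating_singletons by blast
  from LeastI_ex[OF this] show thesis
    using that unfolding partition_dimension_def by blast
qed

lemma twin_number_le_partition_dimension:
  assumes W: "tau_set V E W"
  shows "twin_number V E \<le> partition_dimension V E"
proof -
  obtain P where L: "locating_partition V E P" and card: "card P = partition_dimension V E"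
    using partition_dimension_attained by blast
  have WV: "W \<subseteq> V" and twins: "\<forall>x\<in>W. \<forall>y\<in>W. twins V E x y"
    and card_W: "card W = twin_number V E"
    using W by (auto simp: tau_set_def)
  obtain f where "inj_on f W" "f ` W \<subseteq> P" "\<forall>x\<in>W. x \<in> f x"
    by (rule twins_classes[OF L WV twins])
  moreover have "finite P"
    using L finite_elements[OF finite_V] by (simp add: locating_partition_def)
  ultimately have "card W \<le> card P"
    by (intro card_inj_on_le)
  then show ?thesis
    using card_W card by simp
qed

lemma partition_dimension_le_resolved_pairs:
  assumes Q: "\<Union>Q \<subseteq> V" "disjoint Q" "\<forall>S\<in>Q. card S = 2"
    and resolved: "\<forall>S\<in>Q. \<forall>u\<in>S. \<forall>v\<in>S. u \<noteq> v \<longrightarrow> (\<exists>w\<in>V - \<Union>Q. E w u \<noteq> E w v)"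
  shows "partition_dimension V E \<le> card V - card Q"
proof -
  define P where "P = Q \<union> (\<lambda>x. {x}) ` (V - \<Union>Q)"
  have disjoint_singletons: "Q \<inter> (\<lambda>x. {x}) ` (V - \<Union>Q) = {}"
    using Q(3) by auto
  have "partition_on V P"
  proof (rule partition_onI)
    show "\<Union>P = V"
      unfolding P_def using Q(1) by blast
    show "{} \<notin> P"
      unfolding P_def using Q(3) by fastforce
    fix S T assume "S \<in> P" "T \<in> P" "S \<noteq> T"
    then show "disjnt S T"
      unfolding P_def using Q(2) by (auto simp: disjnt_def pairwise_def)
  qed
  then have L: "locating_partition V E P"
  proof (rule locating_partitionI)
    fix S u v assume "S \<in> P" "u \<in> S" "v \<in> S" "u \<noteq> v"
    then have "S \<in> Q"
      unfolding P_def by auto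
    then obtain w where "w \<in> V - \<Union>Q" "E w u \<noteq> E w v"
      using resolved \<open>u \<in> S\<close> \<open>v \<in> S\<close> \<open>u \<noteq> v\<close> by blast
    then show "\<exists>w. {w} \<in> P \<and> E w u \<noteq> E w v"
      unfolding P_def by blast
  qed
  have fin_Union: "finite (\<Union>Q)"
    using Q(1) finite_V by (rule finite_subset)
  then have fin_Q: "finite Q"
    by (rule finite_UnionD)
  have "card (\<Union>Q) = (\<Sum>S\<in>Q. card S)"
    using Q(3) by (intro card_Union_disjoint[OF Q(2)]) (metis card.infinite zero_neq_numeral)
  also have "\<dots> = 2 * card Q"
    using Q(3) by simp
  finally have card_Union: "card (\<Union>Q) = 2 * card Q" .
  have "card P = card Q + card ((\<lambda>x. {x}) ` (V - \<Union>Q))"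
    unfolding P_def using fin_Q finite_V disjoint_singletons by (intro card_Un_disjoint) auto
  also have "\<dots> = card Q + (card V - card (\<Union>Q))"
    using Q(1) fin_Union by (simp add: card_image card_Diff_subset)
  also have "\<dots> = card V - card Q"
    using card_Union card_mono[OF finite_V Q(1)] by linarith
  finally show ?thesis
    using partition_dimension_le[OF L] by simp
qed

lemma partition_dimension_le_non_twins:
  assumes "a \<in> V" "b \<in> V" "\<not> twins V E a b"
  shows "partition_dimension V E \<le> card V - 1"
proof -
  obtain w where w: "w \<in> V - {a, b}" "E w a \<noteq> E w b"
    using assms(3) adj_sym unfolding twins_iff by blast
  have "a \<noteq> b"
    using assms(3) by (auto simp: twins_def)
  then show ?thesis
    using partition_dimension_le_resolved_pairs[of "{{a, b}}"] assms(1,2) w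
    by (auto simp: disjoint_def)
qed

lemma partition_dimension_le_two_resolved_pairs:
  assumes "two_resolved_pairs V E"
  shows "partition_dimension V E \<le> card V - 2"
proof -
  obtain a1 b1 a2 b2 r1 r2 where pairs: "distinct [a1, b1, a2, b2]" "{a1, b1, a2, b2} \<subseteq> V"
    and r: "r1 \<in> V - {a1, b1, a2, b2}" "r2 \<in> V - {a1, b1, a2, b2}"
      "E r1 a1 \<noteq> E r1 b1" "E r2 a2 \<noteq> E r2 b2"
    using assms unfolding two_resolved_pairs_def by (elim exE conjE) simp
  let ?Q = "{{a1, b1}, {a2, b2}}"
  have Union: "\<Union>?Q = {a1, b1, a2, b2}"
    by blast
  have "partition_dimension V E \<le> card V - card ?Q"
  proof (rule partition_dimension_le_resolved_pairs)
    show "\<Union>?Q \<subseteq> V" "disjoint ?Q" "\<forall>S\<in>?Q. card S = 2"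
      using pairs by (auto simp: disjoint_def)
    show "\<forall>S\<in>?Q. \<forall>u\<in>S. \<forall>v\<in>S. u \<noteq> v \<longrightarrow> (\<exists>w\<in>V - \<Union>?Q. E w u \<noteq> E w v)"
    proof (intro ballI impI)
      fix S u v assume "S \<in> ?Q" "u \<in> S" "v \<in> S" "u \<noteq> v"
      then consider "{u, v} = {a1, b1}" | "{u, v} = {a2, b2}"
        by blast
      then show "\<exists>w\<in>V - \<Union>?Q. E w u \<noteq> E w v"
      proof cases
        case 1
        then have "E r1 u \<noteq> E r1 v"
          using r(3) by (auto simp: doubleton_eq_iff)
        then show ?thesis
          using r(1) Union by blast
      next
        case 2
        then have "E r2 u \<noteq> E r2 v"
          using r(4) by (auto simp: doubleton_eq_iff)
        then show ?thesis
          using r(2) Union by blast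
      qed
    qed
  qed
  moreover have "card ?Q = 2"
    using pairs(1) by (auto simp: doubleton_eq_iff)
  ultimately show ?thesis
    by simp
qed

lemma common_neighbour_outside_twins:
  assumes WV: "W \<subseteq> V" and twins: "\<forall>x\<in>W. \<forall>y\<in>W. twins V E x y"
    and "W \<noteq> {}" "W \<noteq> V"
  obtains b where "b \<in> V - W" "\<forall>w\<in>W. E w b"
proof -
  obtain w1 v where "w1 \<in> W" "v \<in> V - W"
    using assms(3,4) WV by blast
  then obtain a b where ab: "a \<in> W" "b \<in> V - W" "E a b"
    using cut_edge[OF WV] by blast
  have "E w b" if "w \<in> W" for w
    using ab twins that unfolding twins_iff by (cases "w = a") auto
  with ab(2) show thesis
    using that by blast
qed

lemma partition_dimension_ge_complete_tau_set:
  assumes W: "tau_set V E W" and complete: "induced_complete V E W (card V - 2)"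
    and n: "3 \<le> card V"
  shows "card V - 1 \<le> partition_dimension V E"
proof (rule ccontr)
  assume "\<not> ?thesis"
  obtain P where L: "locating_partition V E P" and "card P = partition_dimension V E"
    using partition_dimension_attained by blast
  with \<open>\<not> ?thesis\<close> complete have card: "card P \<le> card W"
    by (simp add: induced_complete_def)
  have P: "partition_on V P" and WV: "W \<subseteq> V" and twins: "\<forall>x\<in>W. \<forall>y\<in>W. twins V E x y"
    using L W by (auto simp: locating_partition_def tau_set_def)
  obtain f where inj: "inj_on f W" and fW: "f ` W \<subseteq> P" and mem: "\<forall>x\<in>W. x \<in> f x"
    by (rule twins_classes[OF L WV twins])
  have onto: "f ` W = P"
    using card_subset_eq[OF finite_elements[OF finite_V P] fW] card_image[OF inj]
      card_mono[OF finite_elements[OF finite_V P] fW] card by simp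
  have "W \<noteq> {}" "W \<noteq> V"
    using complete n by (auto simp: induced_complete_def)
  then obtain b where b: "b \<in> V - W" "\<forall>w\<in>W. E w b"
    using common_neighbour_outside_twins[OF WV twins] by blast
  obtain w0 where w0: "w0 \<in> W" "b \<in> f w0"
    using partition_on_ex_class[OF P] b(1) onto by (metis DiffD1 imageE)
  have V: "b \<in> V" "w0 \<in> V"
    using b w0 WV by auto
  have "b = w0"
  proof (rule locating_partition_dist_set_inj[OF L V])
    fix S assume S: "S \<in> P"
    then obtain w where w: "w \<in> W" "S = f w"
      using onto by blast
    show "dist_set V E b S = dist_set V E w0 S"
    proof (cases "w = w0")
      case True
      have "dist_set V E b S = 0" "dist_set V E w0 S = 0"
        using dist_set_eq_0_iff[OF partition_on_class[OF P S]] True w w0 mem V by auto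
      then show ?thesis
        by simp
    next
      case False
      then have "S \<noteq> f w0"
        using inj w w0 by (auto dest: inj_onD)
      then have "b \<notin> S" "w0 \<notin> S"
        using partition_on_class_unique[OF P S, of "f w0"] fW w0 mem by auto
      moreover have "E b w" "E w0 w"
        using b adj_sym complete w w0 False by (auto simp: induced_complete_def)
      ultimately show ?thesis
        using dist_set_eq_1 partition_on_class[OF P S] w mem V by auto
    qed
  qed
  then show False
    using b w0 by auto
qed

subsection \<open>Graphs without two resolved pairs\<close>

lemma at_most_one_non_neighbour:
  assumes "\<not> two_resolved_pairs V E"
    and "E v a1" "E v a2" "a1 \<noteq> a2" "b1 \<in> V - {v}" "b2 \<in> V - {v}" "\<not> E v b1" "\<not> E v b2"
  shows "b1 = b2"
proof (rule ccontr)
  assume "b1 \<noteq> b2"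
  with assms(2-) have pairs: "distinct [a1, b1, a2, b2]" "{a1, b1, a2, b2} \<subseteq> V"
    and v: "v \<in> V - {a1, b1, a2, b2}"
    by (auto simp: adj_irrefl adj_in_V)
  have "E v a1 \<noteq> E v b1" "E v a2 \<noteq> E v b2"
    using assms(2,3,7,8) by simp_all
  with assms(1) show False
    using two_resolved_pairsI[OF pairs v v] by blast
qed

lemma adjacency_constant_outside:
  assumes "\<not> two_resolved_pairs V E" and "6 \<le> card V"
    and r: "r \<in> V" "q \<in> V - {r}" and sep: "\<forall>x\<in>V - {r, q}. E r x \<noteq> E r q"
    and cds: "c \<in> V - {r, q}" "d \<in> V - {r, q}" "s \<in> V - {r, q}" "distinct [c, d, s]"
  shows "E s c = E s d"
proof (rule ccontr)
  assume "E s c \<noteq> E s d"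
  obtain x where "x \<in> V" "x \<notin> set [r, q, c, d, s]"
    using ex_not_in_list[of "[r, q, c, d, s]" V] assms(2) by auto
  with r cds sep have pairs: "distinct [c, d, x, q]" "{c, d, x, q} \<subseteq> V"
    and res: "s \<in> V - {c, d, x, q}" "r \<in> V - {c, d, x, q}" and "E r x \<noteq> E r q"
    by auto
  then have "two_resolved_pairs V E"
    using two_resolved_pairsI[of c d x q V s r E] pairs res \<open>E s c \<noteq> E s d\<close> by blast
  with assms(1) show False
    by simp
qed

lemma clique_or_independent_outside:
  assumes "\<not> two_resolved_pairs V E" and n: "9 \<le> card V"
    and r: "r \<in> V" "q \<in> V - {r}" and sep: "\<forall>x\<in>V - {r, q}. E r x \<noteq> E r q"
  shows "(\<forall>x\<in>V - {r, q}. \<forall>y\<in>V - {r, q}. x \<noteq> y \<longrightarrow> E x y) \<or>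
         (\<forall>x\<in>V - {r, q}. \<forall>y\<in>V - {r, q}. x \<noteq> y \<longrightarrow> \<not> E x y)"
proof (rule clique_or_independent)
  have "card V - card {r, q} \<le> card (V - {r, q})"
    by (rule diff_card_le_card_Diff) simp
  moreover have "card {r, q} \<le> 2"
    by (simp add: card_insert_if)
  ultimately show "5 \<le> card (V - {r, q})"
    using n by linarith
qed (use adj_sym adjacency_constant_outside[OF assms(1) _ r sep] n in auto)

lemma twin_class_le_twin_number: "x \<in> V \<Longrightarrow> card (twin_class V E x) \<le> twin_number V E"
  unfolding twin_number_def using finite_V by (intro Max_ge) auto

lemma clique_twin_class:
  assumes a: "a1 \<in> V" "a2 \<in> V" "a1 \<noteq> a2"
    and clique: "\<forall>x\<in>V - {a1, a2}. \<forall>y\<in>V - {a1, a2}. x \<noteq> y \<longrightarrow> E x y"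
    and uniform: "\<forall>a\<in>{a1, a2}. (\<forall>x\<in>V - {a1, a2}. E x a) \<or> (\<forall>x\<in>V - {a1, a2}. \<not> E x a)"
    and separated: "\<forall>x\<in>V - {a1, a2}. \<not> twins V E x a1 \<and> \<not> twins V E x a2"
  shows "\<exists>X. induced_complete V E X (card V - 2) \<and> (\<forall>x\<in>X. twin_class V E x = X)"
proof (intro exI conjI ballI)
  let ?X = "V - {a1, a2}"
  show "induced_complete V E ?X (card V - 2)"
    using a clique finite_V by (auto simp: induced_complete_def card_Diff_subset)
  fix x assume x: "x \<in> ?X"
  have "twins V E x y" if "y \<in> ?X" for y
    unfolding twins_iff
  proof
    fix w assume "w \<in> V - {x, y}"
    then show "E x w \<longleftrightarrow> E y w"
      using clique uniform x that by (cases "w \<in> {a1, a2}") auto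
  qed
  then show "twin_class V E x = ?X"
    using separated x unfolding twin_class_def by auto
qed

lemma star_twin_class:
  assumes "2 \<le> card V" and r: "r \<in> V" and pendant: "\<forall>w. E r w \<longleftrightarrow> w = p"
    and independent: "\<forall>x\<in>V - {r, p}. \<forall>y\<in>V - {r, p}. x \<noteq> y \<longrightarrow> \<not> E x y"
  shows "V - {p} \<subseteq> twin_class V E r"
proof -
  have only_p: "E v w \<longleftrightarrow> w = p" if v: "v \<in> V - {p}" for v w
  proof (cases "v = r")
    case False
    then have vX: "v \<in> V - {r, p}"
      using v by blast
    have "u = p" if "E v u" for u
    proof (rule ccontr)
      assume "u \<noteq> p"
      moreover have "u \<in> V" "u \<noteq> v"
        using \<open>E v u\<close> adj_in_V(2) adj_irrefl by blast+
      moreover have "u \<noteq> r"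
        using \<open>E v u\<close> pendant adj_sym vX by blast
      ultimately have "u \<in> V - {r, p}"
        by blast
      then show False
        using independent[rule_format, OF vX] \<open>u \<noteq> v\<close> \<open>E v u\<close> by auto
    qed
    moreover obtain u where "E v u"
      using has_neighbour[OF _ assms(1)] v by blast
    ultimately show ?thesis
      by blast
  qed (use pendant in simp)
  show ?thesis
  proof
    fix v assume v: "v \<in> V - {p}"
    have "twins V E r v"
      unfolding twins_iff using pendant only_p[OF v] by simp
    then show "v \<in> twin_class V E r"
      using v by (simp add: twin_class_def)
  qed
qed

lemma pendant_clique_twin_class:
  assumes nc: "\<not> two_resolved_pairs V E" and n: "9 \<le> card V"
    and r: "r \<in> V" and pendant: "\<forall>w. E r w \<longleftrightarrow> w = p"
    and clique: "\<forall>x\<in>V - {r, p}. \<forall>y\<in>V - {r, p}. x \<noteq> y \<longrightarrow> E x y"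
  shows "\<exists>X. induced_complete V E X (card V - 2) \<and> (\<forall>x\<in>X. twin_class V E x = X)"
proof -
  let ?X = "V - {r, p}"
  have "E r p"
    using pendant by simp
  then have p: "p \<in> V - {r}"
    using adj_in_V(2) adj_irrefl by blast
  have not_adj_r: "\<not> E x r" if "x \<in> ?X" for x
    using that pendant adj_sym by blast
  have other: "\<exists>y\<in>V. y \<notin> set (r # xs)" if "length xs \<le> 3" for xs
    using ex_not_in_list[of "r # xs" V] that n by simp
  have adj_p: "E x p" if x: "x \<in> ?X" for x
  proof (rule ccontr)
    assume "\<not> E x p"
    obtain y1 where y1: "y1 \<in> V" "y1 \<notin> set [r, p, x]"
      using other[of "[p, x]"] by auto
    obtain y2 where y2: "y2 \<in> V" "y2 \<notin> set [r, p, x, y1]"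
      using other[of "[p, x, y1]"] by auto
    have "E x y1" "E x y2" "y1 \<noteq> y2"
      using clique x y1 y2 by auto
    moreover have "p \<in> V - {x}" "r \<in> V - {x}"
      using x p r by auto
    ultimately have "p = r"
      using at_most_one_non_neighbour[OF nc] \<open>\<not> E x p\<close> not_adj_r[OF x] by blast
    then show False
      using p by blast
  qed
  have "\<not> twins V E x r \<and> \<not> twins V E x p" if x: "x \<in> ?X" for x
  proof
    obtain y where y: "y \<in> V" "y \<notin> set [r, p, x]"
      using other[of "[p, x]"] by auto
    then have "y \<in> V - {x, r}" "E x y" "\<not> E r y"
      using clique x pendant by auto
    then show "\<not> twins V E x r"
      unfolding twins_iff by blast
    have "r \<in> V - {x, p}" "\<not> E x r" "E p r"
      using r p x not_adj_r[OF x] \<open>E r p\<close> adj_sym by auto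
    then show "\<not> twins V E x p"
      unfolding twins_iff by blast
  qed
  moreover have "(\<forall>x\<in>?X. E x r) \<or> (\<forall>x\<in>?X. \<not> E x r)"
    using not_adj_r by blast
  moreover have "(\<forall>x\<in>?X. E x p) \<or> (\<forall>x\<in>?X. \<not> E x p)"
    using adj_p by blast
  moreover have "r \<noteq> p"
    using p by blast
  ultimately show ?thesis
    using clique_twin_class[of r p] r p clique by simp
qed

lemma twin_classes_with_pendant_vertex:
  assumes nc: "\<not> two_resolved_pairs V E" and n: "9 \<le> card V"
    and r: "r \<in> V" and pendant: "\<forall>w. E r w \<longleftrightarrow> w = p"
  shows "(\<exists>x\<in>V. V - {p} \<subseteq> twin_class V E x) \<or>
    (\<exists>X. induced_complete V E X (card V - 2) \<and> (\<forall>x\<in>X. twin_class V E x = X))"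
proof -
  have "p \<in> V - {r}"
    using pendant adj_in_V(2) adj_irrefl by blast
  moreover have "\<forall>x\<in>V - {r, p}. E r x \<noteq> E r p"
    using pendant by simp
  ultimately consider
      (clique) "\<forall>x\<in>V - {r, p}. \<forall>y\<in>V - {r, p}. x \<noteq> y \<longrightarrow> E x y"
    | (independent) "\<forall>x\<in>V - {r, p}. \<forall>y\<in>V - {r, p}. x \<noteq> y \<longrightarrow> \<not> E x y"
    using clique_or_independent_outside[OF nc n r] by blast
  then show ?thesis
  proof cases
    case independent
    have "2 \<le> card V"
      using n by simp
    then show ?thesis
      using star_twin_class[OF _ r pendant independent] r by blast
  next
    case clique
    then show ?thesis
      using pendant_clique_twin_class[OF nc n r pendant] by blast
  qed
qed

lemma complete_minus_edge_twin_class: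
  assumes r: "r \<in> V" "q \<in> V - {r}" "\<not> E r q"
    and clique: "\<forall>x\<in>V - {r, q}. \<forall>y\<in>V - {r, q}. x \<noteq> y \<longrightarrow> E x y"
    and adj: "\<forall>x\<in>V - {r, q}. E x r \<and> E x q"
  shows "\<exists>X. induced_complete V E X (card V - 2) \<and> (\<forall>x\<in>X. twin_class V E x = X)"
proof -
  have "\<not> twins V E x r \<and> \<not> twins V E x q" if x: "x \<in> V - {r, q}" for x
  proof
    have "q \<in> V - {x, r}" "E x q" "\<not> E r q"
      using r x adj by auto
    then show "\<not> twins V E x r"
      unfolding twins_iff by blast
    have "r \<in> V - {x, q}" "E x r" "\<not> E q r"
      using r x adj adj_sym by auto
    then show "\<not> twins V E x q"
      unfolding twins_iff by blast
  qed
  moreover have "r \<noteq> q" "\<forall>x\<in>V - {r, q}. E x r" "\<forall>x\<in>V - {r, q}. E x q"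
    using r adj by blast+
  ultimately show ?thesis
    using clique_twin_class[of r q] r clique by simp
qed

lemma at_most_one_non_neighbour_without_pendant:
  assumes nc: "\<not> two_resolved_pairs V E" and "2 \<le> card V"
    and no_pendant: "\<nexists>v p. v \<in> V \<and> (\<forall>w. E v w \<longleftrightarrow> w = p)"
    and v: "v \<in> V" "b1 \<in> V - {v}" "b2 \<in> V - {v}" "\<not> E v b1" "\<not> E v b2"
  shows "b1 = b2"
proof -
  obtain a1 where "E v a1"
    using has_neighbour[OF v(1) assms(2)] by blast
  moreover obtain a2 where "E v a2" "a2 \<noteq> a1"
    using no_pendant v(1) \<open>E v a1\<close> by blast
  ultimately show ?thesis
    using at_most_one_non_neighbour[OF nc _ _ _ v(2-5)] by blast
qed

lemma twin_classes_without_pendant_vertex: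
  assumes nc: "\<not> two_resolved_pairs V E" and n: "9 \<le> card V"
    and no_pendant: "\<nexists>v p. v \<in> V \<and> (\<forall>w. E v w \<longleftrightarrow> w = p)"
    and r: "r \<in> V" "q \<in> V - {r}" "\<not> E r q"
  shows "\<exists>X. induced_complete V E X (card V - 2) \<and> (\<forall>x\<in>X. twin_class V E x = X)"
proof -
  let ?X = "V - {r, q}"
  have "2 \<le> card V"
    using n by simp
  note one_non_neighbour = at_most_one_non_neighbour_without_pendant[OF nc this no_pendant]
  have adj_r: "E x r" and adj_q: "E x q" if x: "x \<in> ?X" for x
  proof -
    have "E r x"
      using one_non_neighbour[of r q x] r x by auto
    moreover have "E q r \<longleftrightarrow> E r q"
      using adj_sym by blast
    then have "E q x"
      using one_non_neighbour[of q r x] r x by auto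
    ultimately show "E x r" "E x q"
      using adj_sym by blast+
  qed
  have "\<forall>x\<in>?X. E r x \<noteq> E r q"
    using adj_r adj_sym r(3) by blast
  then consider (clique) "\<forall>x\<in>?X. \<forall>y\<in>?X. x \<noteq> y \<longrightarrow> E x y"
    | (independent) "\<forall>x\<in>?X. \<forall>y\<in>?X. x \<noteq> y \<longrightarrow> \<not> E x y"
    using clique_or_independent_outside[OF nc n r(1,2)] by blast
  then show ?thesis
  proof cases
    case independent
    obtain x where x: "x \<in> V" "x \<notin> set [r, q]"
      using ex_not_in_list[of "[r, q]" V] n by auto
    obtain y1 where y1: "y1 \<in> V" "y1 \<notin> set [r, q, x]"
      using ex_not_in_list[of "[r, q, x]" V] n by auto
    obtain y2 where y2: "y2 \<in> V" "y2 \<notin> set [r, q, x, y1]"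
      using ex_not_in_list[of "[r, q, x, y1]" V] n by auto
    have "\<not> E x y1" "\<not> E x y2"
      using independent[rule_format, of x] x y1 y2 by auto
    then have "y1 = y2"
      using one_non_neighbour[of x y1 y2] x y1 y2 by auto
    with y2 show ?thesis
      by simp
  next
    case clique
    moreover have "\<forall>x\<in>?X. E x r \<and> E x q"
      using adj_r adj_q by blast
    ultimately show ?thesis
      by (rule complete_minus_edge_twin_class[OF r])
  qed
qed

lemma twin_classes_without_two_resolved_pairs:
  assumes "\<not> two_resolved_pairs V E" "9 \<le> card V" "r \<in> V" "q \<in> V - {r}" "\<not> E r q"
  shows "(\<exists>p. \<exists>x\<in>V. V - {p} \<subseteq> twin_class V E x) \<or>
    (\<exists>X. induced_complete V E X (card V - 2) \<and> (\<forall>x\<in>X. twin_class V E x = X))"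
proof (cases "\<exists>v p. v \<in> V \<and> (\<forall>w. E v w \<longleftrightarrow> w = p)")
  case True
  then obtain v p where "v \<in> V" "\<forall>w. E v w \<longleftrightarrow> w = p"
    by blast
  then have "(\<exists>x\<in>V. V - {p} \<subseteq> twin_class V E x) \<or>
    (\<exists>X. induced_complete V E X (card V - 2) \<and> (\<forall>x\<in>X. twin_class V E x = X))"
    by (rule twin_classes_with_pendant_vertex[OF assms(1,2)])
  then show ?thesis
    by blast
next
  case False
  then show ?thesis
    using twin_classes_without_pendant_vertex[OF assms(1,2) False assms(3-5)] by blast
qed

subsection \<open>The twin number\<close>

lemma twin_number_clique_twin_class:
  assumes W: "tau_set V E W" and n: "5 \<le> card V"
    and X: "induced_complete V E X (card V - 2)" "\<forall>x\<in>X. twin_class V E x = X"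
  shows "twin_number V E = card V - 2 \<and> induced_complete V E W (card V - 2)"
proof -
  have XV: "X \<subseteq> V" and card_X: "card X = card V - 2"
    using X(1) by (auto simp: induced_complete_def)
  obtain x0 where "x0 \<in> X"
    using card_X n by fastforce
  then have ge: "card V - 2 \<le> twin_number V E"
    using twin_class_le_twin_number[of x0] X(2) XV card_X by auto
  have WV: "W \<subseteq> V" and twins: "\<forall>x\<in>W. \<forall>y\<in>W. twins V E x y"
    and card_W: "card W = twin_number V E"
    using W by (auto simp: tau_set_def)
  have "W \<inter> X \<noteq> {}"
  proof
    assume "W \<inter> X = {}"
    then have "card W \<le> card (V - X)"
      using WV finite_V by (intro card_mono) auto
    also have "\<dots> = 2"
      using card_Diff_subset[OF finite_subset[OF XV finite_V] XV] card_X n by simp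
    finally show False
      using card_W ge n by linarith
  qed
  then obtain x where "x \<in> W" "x \<in> X"
    by blast
  then have "W \<subseteq> X"
    using X(2) twins WV unfolding twin_class_def by blast
  then have "twin_number V E = card V - 2"
    using card_mono[OF _ \<open>W \<subseteq> X\<close>] finite_subset[OF XV finite_V] card_W card_X ge by simp
  moreover have "\<forall>u\<in>W. \<forall>v\<in>W. u \<noteq> v \<longrightarrow> E u v"
    using \<open>W \<subseteq> X\<close> X(1) unfolding induced_complete_def by blast
  ultimately show ?thesis
    using WV card_W by (simp add: induced_complete_def)
qed

lemma non_twins_exist:
  assumes "twin_number V E < card V"
  obtains a b where "a \<in> V" "b \<in> V" "\<not> twins V E a b"
proof -
  obtain u where "u \<in> V"
    using assms by fastforce
  show thesis
  proof (rule ccontr)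
    assume "\<not> thesis"
    then have "twin_class V E u = V"
      using that \<open>u \<in> V\<close> unfolding twin_class_def by blast
    then show False
      using twin_class_le_twin_number[OF \<open>u \<in> V\<close>] assms by simp
  qed
qed

lemma non_edge_exists:
  assumes "twin_number V E < card V"
  obtains r q where "r \<in> V" "q \<in> V - {r}" "\<not> E r q"
proof -
  obtain a b where ab: "a \<in> V" "b \<in> V" "\<not> twins V E a b"
    using non_twins_exist[OF assms] by blast
  then obtain w where w: "w \<in> V - {a, b}" "E a w \<noteq> E b w"
    unfolding twins_iff by blast
  show thesis
  proof (cases "E a w")
    case True
    then show thesis
      using that[of w b] ab w adj_sym by blast
  next
    case False
    then show thesis
      using that[of w a] ab w adj_sym by blast
  qed
qed

lemma card_minus_1_le_twin_number:
  assumes "x \<in> V" "V - {p} \<subseteq> twin_class V E x"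
  shows "card V - 1 \<le> twin_number V E"
proof -
  have "card V - 1 \<le> card (V - {p})"
    using diff_card_le_card_Diff[of "{p}" V] by simp
  also have "\<dots> \<le> card (twin_class V E x)"
    using assms(2) finite_V by (intro card_mono) (auto simp: twin_class_def)
  also have "\<dots> \<le> twin_number V E"
    using assms(1) by (rule twin_class_le_twin_number)
  finally show ?thesis .
qed

lemma twin_number_if_partition_dimension:
  assumes n: "9 \<le> card V" and W: "tau_set V E W"
    and pd: "partition_dimension V E = card V - 1"
  shows "twin_number V E = card V - 1 \<or>
    (twin_number V E = card V - 2 \<and> induced_complete V E W (card V - 2))"
proof -
  have lt: "twin_number V E < card V"
    using twin_number_le_partition_dimension[OF W] pd n by linarith
  then obtain r q where rq: "r \<in> V" "q \<in> V - {r}" "\<not> E r q"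
    by (rule non_edge_exists)
  have nc: "\<not> two_resolved_pairs V E"
  proof
    assume "two_resolved_pairs V E"
    then have "partition_dimension V E \<le> card V - 2"
      by (rule partition_dimension_le_two_resolved_pairs)
    with pd n show False
      by linarith
  qed
  from twin_classes_without_two_resolved_pairs[OF nc n rq]
  consider (star) p x where "x \<in> V" "V - {p} \<subseteq> twin_class V E x"
    | (clique) X where "induced_complete V E X (card V - 2)" "\<forall>x\<in>X. twin_class V E x = X"
    by blast
  then show ?thesis
  proof cases
    case star
    then have "twin_number V E = card V - 1"
      using card_minus_1_le_twin_number lt by fastforce
    then show ?thesis
      by blast
  next
    case clique
    then show ?thesis
      using twin_number_clique_twin_class[OF W] n by simp
  qed
qed

lemma partition_dimension_if_twin_number:
  assumes n: "9 \<le> card V" and W: "tau_set V E W"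
    and tw: "twin_number V E = card V - 1 \<or>
      (twin_number V E = card V - 2 \<and> induced_complete V E W (card V - 2))"
  shows "partition_dimension V E = card V - 1"
proof -
  have "twin_number V E < card V"
    using tw n by auto
  then obtain a b where "a \<in> V" "b \<in> V" "\<not> twins V E a b"
    by (rule non_twins_exist)
  then have "partition_dimension V E \<le> card V - 1"
    by (rule partition_dimension_le_non_twins)
  moreover have "card V - 1 \<le> partition_dimension V E"
    using tw
  proof
    assume "twin_number V E = card V - 1"
    then show ?thesis
      using twin_number_le_partition_dimension[OF W] by simp
  next
    assume "twin_number V E = card V - 2 \<and> induced_complete V E W (card V - 2)"
    then show ?thesis
      using partition_dimension_ge_complete_tau_set[OF W] n by simp
  qed
  ultimately show ?thesis
    by simp
qed

end

theorem proposition21: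
  fixes V :: "'a set" and E :: "'a \<Rightarrow> 'a \<Rightarrow> bool" and W :: "'a set" and n :: nat
  assumes "simple_graph V E" and "connected_graph V E"
    and "card V = n" and "n \<ge> 9"
    and "tau_set V E W"
  shows "partition_dimension V E = n - 1 \<longleftrightarrow>
           (twin_number V E = n - 1 \<or>
            (twin_number V E = n - 2 \<and> induced_complete V E W (n - 2)))"
proof -
  interpret connected_simple_graph V E
    using assms(1,2) by unfold_locales
  show ?thesis
    using twin_number_if_partition_dimension partition_dimension_if_twin_number assms(3-5)
    by blast
qed

end
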